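(* Let $R$ be a rational map of degree $2$ having two attracting fixed points and one repelling fixed point. Then: (i) If the multipliers of the two attracting fixed points are equal, say to $\lambda$, then $R$ is conjugate (by a Möbius map) to $N_{h,p}$ with $h=1-\lambda$ and $p(z)=z^2-1$. (ii) If one of the attracting fixed points is superattracting and the multiplier of the other attracting fixed point is $\frac{n}{m}$, where $m\in\mathbb{N}$ and $n\in\mathbb{N}\setminus\{0\}$, then $R$ is conjugate to $N_{h,p}$ with $h=m-n$ and $p(z)=(z-1)^{m-n}(z+1)^m$. (iii) If the ratio of the residue fixed point indices of $R$ at the two attracting fixed points is $\frac{k}{m}$ with $k,m\in\mathbb{N}$, then there exists $h\in\mathbb{C}\setminus\{0\}$ such that $R$ is conjugate to $N_{h,p}$ with $p(z)=(z-1)^k(z+1)^m$.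
   Context: For a polynomial $p$ and $h\in\mathbb{C}$, $N_{h,p}(z)=z-h\,\frac{p(z)}{p'(z)}$. The residue fixed point index of $R$ at a fixed point $z_0$ is $\iota(R,z_0)=\frac{1}{2\pi i}\oint_\gamma\frac{dz}{z-R(z)}$ for a small positively oriented loop $\gamma$ around $z_0$ enclosing no other fixed point; if the multiplier $\lambda\neq 1$, then $\iota(R,z_0)=\frac{1}{1-\lambda}$. *)

theory Defs
  imports "HOL-Complex_Analysis.Complex_Analysis" "HOL-Computational_Algebra.Polynomial_Factorial" "HOL-Computational_Algebra.Field_as_Ring"
begin

text \<open>The Riemann sphere is modelled as complex option: Some z is the finite point z,
  None is the point at infinity.\<close>

definition red_num :: "complex poly \<Rightarrow> complex poly \<Rightarrow> complex poly" where
  "red_num P Q = P div gcd P Q"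

definition red_den :: "complex poly \<Rightarrow> complex poly \<Rightarrow> complex poly" where
  "red_den P Q = Q div gcd P Q"

definition rat_sphere :: "complex poly \<Rightarrow> complex poly \<Rightarrow> complex option \<Rightarrow> complex option" where
  "rat_sphere P Q \<zeta> = (let A = red_num P Q; B = red_den P Q in
     (case \<zeta> of
        Some z \<Rightarrow> (if poly B z = 0 then None else Some (poly A z / poly B z))
      | None \<Rightarrow> (if degree A > degree B then None
                 else if degree A = degree B then Some (lead_coeff A / lead_coeff B)
                 else Some 0)))"

definition finite_chart :: "complex poly \<Rightarrow> complex poly \<Rightarrow> complex \<Rightarrow> complex" where
  "finite_chart P Q = (\<lambda>z. poly (red_num P Q) z / poly (red_den P Q) z)"

text \<open>Expression of the map in the chart w = 1/z near infinity, i.e. w \<mapsto> 1 / R(1/w),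
  valid when infinity is a fixed point (degree of numerator > degree of denominator).\<close>
definition inf_chart :: "complex poly \<Rightarrow> complex poly \<Rightarrow> complex \<Rightarrow> complex" where
  "inf_chart P Q = (let A = red_num P Q; B = red_den P Q in
     (\<lambda>w. w ^ (degree A - degree B) * poly (reflect_poly B) w / poly (reflect_poly A) w))"

definition multiplier :: "complex poly \<Rightarrow> complex poly \<Rightarrow> complex option \<Rightarrow> complex" where
  "multiplier P Q \<zeta> = (case \<zeta> of
      Some z \<Rightarrow> deriv (finite_chart P Q) z
    | None \<Rightarrow> deriv (inf_chart P Q) 0)"

definition fp_index :: "complex poly \<Rightarrow> complex poly \<Rightarrow> complex option \<Rightarrow> complex" where
  "fp_index P Q \<zeta> = (case \<zeta> of
      Some z \<Rightarrow> residue (\<lambda>w. 1 / (w - finite_chart P Q w)) z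
    | None \<Rightarrow> residue (\<lambda>w. 1 / (w - inf_chart P Q w)) 0)"

definition mobius :: "complex \<Rightarrow> complex \<Rightarrow> complex \<Rightarrow> complex \<Rightarrow> complex option \<Rightarrow> complex option" where
  "mobius a b c d \<zeta> = (case \<zeta> of
      Some z \<Rightarrow> (if c * z + d = 0 then None else Some ((a * z + b) / (c * z + d)))
    | None \<Rightarrow> (if c = 0 then None else Some (a / c)))"

definition mobius_conjugate :: "(complex option \<Rightarrow> complex option) \<Rightarrow> (complex option \<Rightarrow> complex option) \<Rightarrow> bool" where
  "mobius_conjugate R S \<longleftrightarrow>
     (\<exists>a b c d. a * d - b * c \<noteq> 0 \<and> mobius a b c d \<circ> R = S \<circ> mobius a b c d)"

text \<open>Relaxed Newton map N_{h,p}(z) = z - h p(z)/p'(z) = (z p' - h p)/p' on the sphere.\<close>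
definition newton_sphere :: "complex \<Rightarrow> complex poly \<Rightarrow> complex option \<Rightarrow> complex option" where
  "newton_sphere h p = rat_sphere ([:0, 1:] * pderiv p - smult h p) (pderiv p)"

end

(*
  A map R of degree 2 lifts to a pair (P, Q) of binary quadratic forms, and its fixed points
  are the lines spanned by eigenvectors v1, v2, v3 of this lift. Interpolating through the three
  fixed points writes the lift as  sum_i tau_i v_i l_j l_k, where l_i is the linear form vanishing
  on v_i. Then x Q - y P = (tau1 + tau2 + tau3) l1 l2 l3, which shows that the multiplier at v_i
  is 1 - (tau1 + tau2 + tau3) / tau_i, while the fixed point index is 1 / (1 - multiplier).
  Two such maps whose weights tau are proportional are conjugate by the linear map matching
  their fixed points. The relaxed Newton map of (z - 1)^k (z + 1)^m has fixed points 1, -1 and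
  infinity with weights proportional to (-k, -m, k + m - h), and prescribing the multipliers
  1 - h/k and 1 - h/m at two fixed points of R forces exactly these weights; statements
  (i)-(iii) follow by choosing k, m and h.
*)

theory Submission
  imports Defs "HOL-Computational_Algebra.Fundamental_Theorem_Algebra"
begin

section \<open>Fixed point index\<close>

lemma residue_fixed_point_index:
  fixes f :: "complex \<Rightarrow> complex"
  assumes "f holomorphic_on S" "open S" "z \<in> S" "f z = z" "deriv f z \<noteq> 1"
  shows "residue (\<lambda>w. 1 / (w - f w)) z = 1 / (1 - deriv f z)"
proof -
  obtain e where "e > 0" "ball z e \<subseteq> S"
    using assms(2,3) openE by blast
  then have hol: "f holomorphic_on ball z e"
    using assms(1) holomorphic_on_subset by blast
  have "((\<lambda>w. w - f w) has_field_derivative 1 - deriv f z) (at z)"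
    using hol \<open>e > 0\<close> by (auto intro!: derivative_eq_intros holomorphic_derivI)
  then show ?thesis
    using hol \<open>e > 0\<close> assms(4,5)
    by (intro residue_simple_pole_deriv[where s = "ball z e"]) (auto intro!: holomorphic_intros)
qed

lemma deriv_fixed_point_factor:
  fixes f g :: "complex \<Rightarrow> complex"
  assumes "open S" "c \<in> S" "g field_differentiable (at c)"
    and "\<And>w. w \<in> S \<Longrightarrow> f w = w - (w - c) * g w"
  shows "deriv f c = 1 - g c"
proof -
  have "eventually (\<lambda>w. f w = w - (w - c) * g w) (nhds c)"
    using assms(1,2,4) eventually_nhds by blast
  then have "deriv f c = deriv (\<lambda>w. w - (w - c) * g w) c"
    by (rule deriv_cong_ev) simp
  also have "\<dots> = 1 - g c"
    using assms(3) unfolding field_differentiable_def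
    by (auto intro!: DERIV_imp_deriv derivative_eq_intros)
  finally show ?thesis .
qed

lemma red_num_coprime [simp]: "coprime P Q \<Longrightarrow> red_num P Q = P"
  and red_den_coprime [simp]: "coprime P Q \<Longrightarrow> red_den P Q = Q"
  by (simp_all add: red_num_def red_den_def coprime_iff_gcd_eq_1)

lemma fp_index_eq_inverse_one_minus_multiplier:
  assumes cop: "coprime P Q" and fixed: "rat_sphere P Q \<zeta> = \<zeta>"
    and mult: "multiplier P Q \<zeta> \<noteq> 1"
  shows "fp_index P Q \<zeta> = 1 / (1 - multiplier P Q \<zeta>)"
proof (cases \<zeta>)
  case (Some z)
  then have "poly Q z \<noteq> 0" and "poly P z / poly Q z = z"
    using cop fixed by (auto simp: rat_sphere_def split: if_splits)
  moreover have "finite_chart P Q holomorphic_on {w. poly Q w \<noteq> 0}"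
    using cop by (auto simp: finite_chart_def intro!: holomorphic_intros)
  moreover have "open {w. poly Q w \<noteq> 0}"
    by (intro open_Collect_neq continuous_intros)
  ultimately show ?thesis
    using Some mult residue_fixed_point_index[of "finite_chart P Q" "{w. poly Q w \<noteq> 0}" z] cop
    by (simp add: fp_index_def multiplier_def finite_chart_def)
next
  case None
  then have deg: "degree P > degree Q"
    using cop fixed by (auto simp: rat_sphere_def Let_def split: if_splits)
  then have "poly (reflect_poly P) 0 \<noteq> 0"
    by auto
  moreover have "inf_chart P Q holomorphic_on {w. poly (reflect_poly P) w \<noteq> 0}"
    using cop by (auto simp: inf_chart_def intro!: holomorphic_intros)
  moreover have "open {w. poly (reflect_poly P) w \<noteq> 0}"
    by (intro open_Collect_neq continuous_intros)
  moreover have "inf_chart P Q 0 = 0"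
    using cop deg by (simp add: inf_chart_def)
  ultimately show ?thesis
    using None mult residue_fixed_point_index[of "inf_chart P Q" "{w. poly (reflect_poly P) w \<noteq> 0}" 0]
    by (simp add: fp_index_def multiplier_def)
qed

section \<open>Homogeneous lift of a quadratic map\<close>

definition homog2 :: "complex poly \<Rightarrow> complex \<Rightarrow> complex \<Rightarrow> complex" where
  "homog2 A x y = coeff A 0 * y^2 + coeff A 1 * x * y + coeff A 2 * x^2"

definition proj_pt :: "complex \<Rightarrow> complex \<Rightarrow> complex option" where
  "proj_pt x y = (if y = 0 then None else Some (x / y))"

definition homog_coords :: "complex option \<Rightarrow> complex \<times> complex" where
  "homog_coords \<zeta> = (case \<zeta> of Some z \<Rightarrow> (z, 1) | None \<Rightarrow> (1, 0))"

text \<open>As a function of (x, y), det2 x y x' y' is the linear form vanishing on the point (x' : y').\<close>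

abbreviation det2 :: "complex \<Rightarrow> complex \<Rightarrow> complex \<Rightarrow> complex \<Rightarrow> complex" where
  "det2 x y x' y' \<equiv> x * y' - y * x'"

lemma poly_degree_le_2:
  assumes "degree (A :: complex poly) \<le> 2"
  shows "poly A z = coeff A 0 + coeff A 1 * z + coeff A 2 * z^2"
proof -
  have expand: "[:coeff A 0, coeff A 1, coeff A 2:] = A"
  proof (rule poly_eqI)
    fix n show "coeff [:coeff A 0, coeff A 1, coeff A 2:] n = coeff A n"
      using assms
      by (cases "n \<le> 2") (auto simp: coeff_pCons numeral_2_eq_2 le_Suc_eq split: nat.split intro!: coeff_eq_0)
  qed
  have "poly A z = poly [:coeff A 0, coeff A 1, coeff A 2:] z"
    by (simp only: expand)
  also have "\<dots> = coeff A 0 + coeff A 1 * z + coeff A 2 * z^2"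
    by (simp add: algebra_simps power2_eq_square)
  finally show ?thesis .
qed

lemma homog2_eq_poly: "degree A \<le> 2 \<Longrightarrow> y \<noteq> 0 \<Longrightarrow> homog2 A x y = y^2 * poly A (x / y)"
  by (simp add: poly_degree_le_2 homog2_def power2_eq_square distrib_left)

lemma rat_sphere_proj_pt:
  assumes cop: "coprime P Q" and deg: "max (degree P) (degree Q) = 2" and nz: "x \<noteq> 0 \<or> y \<noteq> 0"
  shows "rat_sphere P Q (proj_pt x y) = proj_pt (homog2 P x y) (homog2 Q x y)"
proof (cases "y = 0")
  case False
  with cop deg show ?thesis
    by (simp add: rat_sphere_def homog2_eq_poly proj_pt_def Let_def)
next
  case True
  then have x: "x \<noteq> 0" and homog: "homog2 P x y = coeff P 2 * x^2" "homog2 Q x y = coeff Q 2 * x^2"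
    using nz by (simp_all add: homog2_def)
  have lead: "coeff A 2 \<noteq> 0" if "degree A = 2" for A :: "complex poly"
    using that by (metis leading_coeff_0_iff zero_neq_numeral degree_0)
  consider "degree P = 2" "degree Q < 2" | "degree P = 2" "degree Q = 2" | "degree P < 2" "degree Q = 2"
    using deg by linarith
  then show ?thesis
  proof cases
    case 1
    then have "coeff Q 2 = 0" by (simp add: coeff_eq_0)
    with 1 show ?thesis using True homog cop by (simp add: rat_sphere_def proj_pt_def Let_def)
  next
    case 2
    then show ?thesis using True x homog cop lead[of P] lead[of Q] by (simp add: rat_sphere_def proj_pt_def Let_def)
  next
    case 3
    then have "coeff P 2 = 0" by (simp add: coeff_eq_0)
    with 3 show ?thesis using True x homog cop lead[of Q] by (simp add: rat_sphere_def proj_pt_def Let_def)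
  qed
qed

lemma homog2_lift_nonzero:
  assumes cop: "coprime P Q" and deg: "max (degree P) (degree Q) = 2" and nz: "x \<noteq> 0 \<or> y \<noteq> 0"
  shows "homog2 P x y \<noteq> 0 \<or> homog2 Q x y \<noteq> 0"
proof (cases "y = 0")
  case False
  then show ?thesis
    using coprime_poly_0[OF cop, of "x / y"] deg by (simp add: homog2_eq_poly)
next
  case True
  have "coeff P 2 \<noteq> 0 \<or> coeff Q 2 \<noteq> 0"
    using deg by (metis leading_coeff_0_iff max_def zero_neq_numeral degree_0)
  then show ?thesis
    using True nz by (auto simp: homog2_def)
qed

lemma proj_pt_scale: "k \<noteq> 0 \<Longrightarrow> proj_pt (k * x) (k * y) = proj_pt x y"
  by (simp add: proj_pt_def)

lemma proj_pt_eq_iff: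
  assumes "x \<noteq> 0 \<or> y \<noteq> 0" "x' \<noteq> 0 \<or> y' \<noteq> 0"
  shows "proj_pt x y = proj_pt x' y' \<longleftrightarrow> x * y' = x' * y"
  using assms by (auto simp: proj_pt_def field_simps)

lemma mobius_proj_pt:
  assumes "x \<noteq> 0 \<or> y \<noteq> 0"
  shows "mobius a b c d (proj_pt x y) = proj_pt (a * x + b * y) (c * x + d * y)"
proof (cases "y = 0")
  case True
  then show ?thesis
    using assms by (auto simp: mobius_def proj_pt_def)
next
  case False
  have "c * (x / y) + d = (c * x + d * y) / y" "a * (x / y) + b = (a * x + b * y) / y"
    using False by (metis add_divide_distrib nonzero_mult_div_cancel_right times_divide_eq_right)+
  moreover have "(u / y) / (v / y) = u / v" for u v
    using False by (cases "v = 0") simp_all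
  ultimately show ?thesis
    using False by (simp only: mobius_def proj_pt_def option.case divide_eq_0_iff simp_thms if_False)
qed

lemma homog_coords:
  assumes "homog_coords \<zeta> = (x, y)"
  shows "proj_pt x y = \<zeta>" and "x \<noteq> 0 \<or> y \<noteq> 0"
  using assms by (auto simp: homog_coords_def proj_pt_def split: option.splits)

lemma fixed_point_eigenvector:
  assumes cop: "coprime P Q" and deg: "max (degree P) (degree Q) = 2"
    and nz: "x \<noteq> 0 \<or> y \<noteq> 0" and fixed: "rat_sphere P Q (proj_pt x y) = proj_pt x y"
  obtains \<mu> where "\<mu> \<noteq> 0" "homog2 P x y = \<mu> * x" "homog2 Q x y = \<mu> * y"
proof -
  have lift: "homog2 P x y \<noteq> 0 \<or> homog2 Q x y \<noteq> 0"
    using homog2_lift_nonzero[OF cop deg nz] .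
  then have collinear: "homog2 P x y * y = x * homog2 Q x y"
    using fixed rat_sphere_proj_pt[OF cop deg nz] proj_pt_eq_iff[OF _ nz] by simp
  show ?thesis
  proof (cases "y = 0")
    case True
    then show ?thesis
      using that[of "homog2 P x y / x"] collinear lift nz by auto
  next
    case False
    with collinear lift have "homog2 Q x y \<noteq> 0"
      by auto
    with False collinear show ?thesis
      by (intro that[of "homog2 Q x y / y"]) (auto simp: field_simps)
  qed
qed

lemma homog_coords_independent:
  assumes "homog_coords \<zeta> = (x, y)" "homog_coords \<zeta>' = (x', y')" "\<zeta> \<noteq> \<zeta>'"
  shows "det2 x y x' y' \<noteq> 0"
  using assms homog_coords[OF assms(1)] homog_coords[OF assms(2)] proj_pt_eq_iff[of x y x' y'] by auto

lemma inf_chart_homog2: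
  assumes cop: "coprime P Q" and dP: "degree P = 2" and dQ: "degree Q < 2"
  shows "inf_chart P Q w = homog2 Q 1 w / homog2 P 1 w"
proof (cases "w = 0")
  case True
  have "coeff Q 2 = 0"
    using dQ by (intro coeff_eq_0) simp
  then show ?thesis
    using True dP dQ cop by (simp add: inf_chart_def homog2_def)
next
  case False
  have e: "w ^ (2 - degree Q) * w ^ degree Q = w^2"
    using dQ by (metis le_add_diff_inverse2 less_imp_le_nat power_add)
  have "inf_chart P Q w = w ^ (2 - degree Q) * (w ^ degree Q * poly Q (inverse w)) / (w^2 * poly P (inverse w))"
    using False dP cop by (simp add: inf_chart_def poly_reflect_poly_nz)
  also have "\<dots> = (w^2 * poly Q (1 / w)) / (w^2 * poly P (1 / w))"
    by (simp add: e mult.assoc[symmetric] inverse_eq_divide)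
  also have "\<dots> = homog2 Q 1 w / homog2 P 1 w"
    using homog2_eq_poly[of Q w 1] homog2_eq_poly[of P w 1] dP dQ False by simp
  finally show ?thesis .
qed

lemma multiplier_finite_fixed_point:
  assumes cop: "coprime P Q" and deg: "max (degree P) (degree Q) = 2"
    and eig: "homog2 Q z 1 = \<mu>" "\<mu> \<noteq> 0"
    and factor: "\<And>w. w * homog2 Q w 1 - homog2 P w 1 = (w - z) * g w"
    and hol: "g holomorphic_on UNIV"
  shows "multiplier P Q (Some z) = 1 - g z / \<mu>"
proof -
  define S where "S = {w. homog2 Q w 1 \<noteq> 0}"
  have "open S"
    unfolding S_def homog2_def by (intro open_Collect_neq continuous_intros)
  moreover have "z \<in> S"
    using eig by (simp add: S_def)
  moreover have "(\<lambda>w. g w / homog2 Q w 1) holomorphic_on S"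
    using holomorphic_on_subset[OF hol] unfolding S_def homog2_def by (intro holomorphic_intros) auto
  then have "(\<lambda>w. g w / homog2 Q w 1) field_differentiable (at z)"
    using \<open>open S\<close> \<open>z \<in> S\<close> by (rule holomorphic_on_imp_differentiable_at)
  moreover have "finite_chart P Q w = w - (w - z) * (g w / homog2 Q w 1)" if "w \<in> S" for w
  proof -
    have "poly P w = homog2 P w 1" "poly Q w = homog2 Q w 1"
      using deg homog2_eq_poly[of P 1 w] homog2_eq_poly[of Q 1 w] by simp_all
    moreover have "homog2 P w 1 = w * homog2 Q w 1 - (w - z) * g w"
      using factor[of w] by (simp add: algebra_simps)
    ultimately show ?thesis
      using that cop by (simp add: S_def finite_chart_def diff_divide_distrib)
  qed
  ultimately have "deriv (finite_chart P Q) z = 1 - g z / homog2 Q z 1"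
    by (rule deriv_fixed_point_factor)
  then show ?thesis
    using eig by (simp add: multiplier_def)
qed

lemma multiplier_infinite_fixed_point:
  assumes cop: "coprime P Q" and dP: "degree P = 2" and dQ: "degree Q < 2"
    and eig: "homog2 P 1 0 = \<mu>" "\<mu> \<noteq> 0"
    and factor: "\<And>w. homog2 Q 1 w - w * homog2 P 1 w = - w * g w"
    and hol: "g holomorphic_on UNIV"
  shows "multiplier P Q None = 1 - g 0 / \<mu>"
proof -
  define S where "S = {w. homog2 P 1 w \<noteq> 0}"
  have "open S"
    unfolding S_def homog2_def by (intro open_Collect_neq continuous_intros)
  moreover have "0 \<in> S"
    using eig by (simp add: S_def)
  moreover have "(\<lambda>w. g w / homog2 P 1 w) holomorphic_on S"
    using holomorphic_on_subset[OF hol] unfolding S_def homog2_def by (intro holomorphic_intros) auto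
  then have "(\<lambda>w. g w / homog2 P 1 w) field_differentiable (at 0)"
    using \<open>open S\<close> \<open>0 \<in> S\<close> by (rule holomorphic_on_imp_differentiable_at)
  moreover have "inf_chart P Q w = w - (w - 0) * (g w / homog2 P 1 w)" if "w \<in> S" for w
  proof -
    have "homog2 Q 1 w = w * homog2 P 1 w - w * g w"
      using factor[of w] by (simp add: algebra_simps)
    then show ?thesis
      using that inf_chart_homog2[OF cop dP dQ, of w] by (simp add: S_def diff_divide_distrib)
  qed
  ultimately have "deriv (inf_chart P Q) 0 = 1 - g 0 / homog2 P 1 0"
    by (rule deriv_fixed_point_factor)
  then show ?thesis
    using eig by (simp add: multiplier_def)
qed

lemma multiplier_fixed_point_lift:
  assumes cop: "coprime P Q" and deg: "max (degree P) (degree Q) = 2"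
    and coords: "homog_coords \<zeta> = (x0, y0)"
    and eig: "homog2 P x0 y0 = \<mu> * x0" "homog2 Q x0 y0 = \<mu> * y0" "\<mu> \<noteq> 0"
    and factor: "\<And>x y. x * homog2 Q x y - y * homog2 P x y = det2 x y x0 y0 * G x y"
    and hol: "(\<lambda>w. G w 1) holomorphic_on UNIV" "(\<lambda>w. G 1 w) holomorphic_on UNIV"
  shows "multiplier P Q \<zeta> = 1 - G x0 y0 / \<mu>"
proof (cases \<zeta>)
  case (Some z)
  then have xy: "x0 = z" "y0 = 1"
    using coords by (auto simp: homog_coords_def)
  have "w * homog2 Q w 1 - homog2 P w 1 = (w - z) * G w 1" for w
    using factor[of w 1] xy by simp
  with Some xy show ?thesis
    using multiplier_finite_fixed_point[OF cop deg _ eig(3) _ hol(1)] eig by simp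
next
  case None
  then have xy: "x0 = 1" "y0 = 0"
    using coords by (auto simp: homog_coords_def)
  then have "coeff Q 2 = 0"
    using eig(2) by (simp add: homog2_def)
  then have dQ: "degree Q < 2"
    using deg by (metis le_neq_implies_less leading_coeff_0_iff max.bounded_iff order_refl degree_0 zero_neq_numeral)
  with deg have dP: "degree P = 2"
    by (simp add: max_def split: if_splits)
  have "homog2 Q 1 w - w * homog2 P 1 w = - w * G 1 w" for w
    using factor[of 1 w] xy by simp
  with None xy show ?thesis
    using multiplier_infinite_fixed_point[OF cop dP dQ _ eig(3) _ hol(2)] eig by simp
qed

section \<open>Normal form at three fixed points\<close>

lemma homog2_interpolation:
  assumes d12: "det2 x1 y1 x2 y2 \<noteq> 0" and d13: "det2 x1 y1 x3 y3 \<noteq> 0" and d23: "det2 x2 y2 x3 y3 \<noteq> 0"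
  shows "homog2 A x y =
      homog2 A x1 y1 / (det2 x1 y1 x2 y2 * det2 x1 y1 x3 y3) * (det2 x y x2 y2 * det2 x y x3 y3)
    + homog2 A x2 y2 / (det2 x2 y2 x1 y1 * det2 x2 y2 x3 y3) * (det2 x y x1 y1 * det2 x y x3 y3)
    + homog2 A x3 y3 / (det2 x3 y3 x1 y1 * det2 x3 y3 x2 y2) * (det2 x y x1 y1 * det2 x y x2 y2)"
    (is "_ = ?rhs")
proof -
  define D where "D = det2 x1 y1 x2 y2 * det2 x1 y1 x3 y3 * det2 x2 y2 x3 y3"
  have "D \<noteq> 0"
    using assms by (simp add: D_def)
  have "homog2 A x y * D =
      homog2 A x1 y1 * (det2 x y x2 y2 * det2 x y x3 y3) * det2 x2 y2 x3 y3
    - homog2 A x2 y2 * (det2 x y x1 y1 * det2 x y x3 y3) * det2 x1 y1 x3 y3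
    + homog2 A x3 y3 * (det2 x y x1 y1 * det2 x y x2 y2) * det2 x1 y1 x2 y2"
    unfolding homog2_def D_def by algebra
  also have "\<dots> = ?rhs * D"
  proof -
    have swap: "det2 x2 y2 x1 y1 = - det2 x1 y1 x2 y2" "det2 x3 y3 x1 y1 = - det2 x1 y1 x3 y3"
        "det2 x3 y3 x2 y2 = - det2 x2 y2 x3 y3"
      by algebra+
    have "v1 * L1 * c - v2 * L2 * b + v3 * L3 * a
        = (v1 / (a * b) * L1 + v2 / (- a * c) * L2 + v3 / (- b * - c) * L3) * (a * b * c)"
      if "a \<noteq> 0" "b \<noteq> 0" "c \<noteq> 0" for a b c v1 v2 v3 L1 L2 L3 :: complex
      using that by (simp add: field_simps)
    from this[OF assms] show ?thesis
      unfolding swap D_def by simp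
  qed
  finally show ?thesis
    using \<open>D \<noteq> 0\<close> by simp
qed

lemma lift_normal_form:
  assumes cop: "coprime P Q" and deg: "max (degree P) (degree Q) = 2"
    and nz: "x1 \<noteq> 0 \<or> y1 \<noteq> 0" "x2 \<noteq> 0 \<or> y2 \<noteq> 0" "x3 \<noteq> 0 \<or> y3 \<noteq> 0"
    and fixed: "rat_sphere P Q (proj_pt x1 y1) = proj_pt x1 y1" "rat_sphere P Q (proj_pt x2 y2) = proj_pt x2 y2"
      "rat_sphere P Q (proj_pt x3 y3) = proj_pt x3 y3"
    and d12: "det2 x1 y1 x2 y2 \<noteq> 0" and d13: "det2 x1 y1 x3 y3 \<noteq> 0" and d23: "det2 x2 y2 x3 y3 \<noteq> 0"
  obtains \<tau>1 \<tau>2 \<tau>3 where "\<tau>1 \<noteq> 0" "\<tau>2 \<noteq> 0" "\<tau>3 \<noteq> 0"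
    and "\<And>x y. homog2 P x y = \<tau>1 * x1 * (det2 x y x2 y2 * det2 x y x3 y3)
        + \<tau>2 * x2 * (det2 x y x1 y1 * det2 x y x3 y3) + \<tau>3 * x3 * (det2 x y x1 y1 * det2 x y x2 y2)"
    and "\<And>x y. homog2 Q x y = \<tau>1 * y1 * (det2 x y x2 y2 * det2 x y x3 y3)
        + \<tau>2 * y2 * (det2 x y x1 y1 * det2 x y x3 y3) + \<tau>3 * y3 * (det2 x y x1 y1 * det2 x y x2 y2)"
proof -
  obtain \<mu>1 where \<mu>1: "\<mu>1 \<noteq> 0" "homog2 P x1 y1 = \<mu>1 * x1" "homog2 Q x1 y1 = \<mu>1 * y1"
    using fixed_point_eigenvector[OF cop deg nz(1) fixed(1)] .
  obtain \<mu>2 where \<mu>2: "\<mu>2 \<noteq> 0" "homog2 P x2 y2 = \<mu>2 * x2" "homog2 Q x2 y2 = \<mu>2 * y2"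
    using fixed_point_eigenvector[OF cop deg nz(2) fixed(2)] .
  obtain \<mu>3 where \<mu>3: "\<mu>3 \<noteq> 0" "homog2 P x3 y3 = \<mu>3 * x3" "homog2 Q x3 y3 = \<mu>3 * y3"
    using fixed_point_eigenvector[OF cop deg nz(3) fixed(3)] .
  have swap: "det2 x2 y2 x1 y1 \<noteq> 0" "det2 x3 y3 x1 y1 \<noteq> 0" "det2 x3 y3 x2 y2 \<noteq> 0"
    using d12 d13 d23 by (simp_all add: right_minus_eq mult.commute)
  show ?thesis
  proof (rule that[of "\<mu>1 / (det2 x1 y1 x2 y2 * det2 x1 y1 x3 y3)"
        "\<mu>2 / (det2 x2 y2 x1 y1 * det2 x2 y2 x3 y3)" "\<mu>3 / (det2 x3 y3 x1 y1 * det2 x3 y3 x2 y2)"])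
    show "\<mu>1 / (det2 x1 y1 x2 y2 * det2 x1 y1 x3 y3) \<noteq> 0" "\<mu>2 / (det2 x2 y2 x1 y1 * det2 x2 y2 x3 y3) \<noteq> 0"
      "\<mu>3 / (det2 x3 y3 x1 y1 * det2 x3 y3 x2 y2) \<noteq> 0"
      using \<mu>1 \<mu>2 \<mu>3 d12 d13 d23 swap by simp_all
    show "homog2 P x y = \<mu>1 / (det2 x1 y1 x2 y2 * det2 x1 y1 x3 y3) * x1 * (det2 x y x2 y2 * det2 x y x3 y3)
        + \<mu>2 / (det2 x2 y2 x1 y1 * det2 x2 y2 x3 y3) * x2 * (det2 x y x1 y1 * det2 x y x3 y3)
        + \<mu>3 / (det2 x3 y3 x1 y1 * det2 x3 y3 x2 y2) * x3 * (det2 x y x1 y1 * det2 x y x2 y2)" for x y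
      using homog2_interpolation[OF d12 d13 d23, of P x y] \<mu>1 \<mu>2 \<mu>3 by simp
    show "homog2 Q x y = \<mu>1 / (det2 x1 y1 x2 y2 * det2 x1 y1 x3 y3) * y1 * (det2 x y x2 y2 * det2 x y x3 y3)
        + \<mu>2 / (det2 x2 y2 x1 y1 * det2 x2 y2 x3 y3) * y2 * (det2 x y x1 y1 * det2 x y x3 y3)
        + \<mu>3 / (det2 x3 y3 x1 y1 * det2 x3 y3 x2 y2) * y3 * (det2 x y x1 y1 * det2 x y x2 y2)" for x y
      using homog2_interpolation[OF d12 d13 d23, of Q x y] \<mu>1 \<mu>2 \<mu>3 by simp
  qed
qed

lemma multiplier_normal_form:
  assumes cop: "coprime P Q" and deg: "max (degree P) (degree Q) = 2"
    and coords: "homog_coords \<zeta> = (x1, y1)"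
    and d12: "det2 x1 y1 x2 y2 \<noteq> 0" and d13: "det2 x1 y1 x3 y3 \<noteq> 0" and "\<tau>1 \<noteq> 0"
    and HP: "\<And>x y. homog2 P x y = \<tau>1 * x1 * (det2 x y x2 y2 * det2 x y x3 y3)
        + \<tau>2 * x2 * (det2 x y x1 y1 * det2 x y x3 y3) + \<tau>3 * x3 * (det2 x y x1 y1 * det2 x y x2 y2)"
    and HQ: "\<And>x y. homog2 Q x y = \<tau>1 * y1 * (det2 x y x2 y2 * det2 x y x3 y3)
        + \<tau>2 * y2 * (det2 x y x1 y1 * det2 x y x3 y3) + \<tau>3 * y3 * (det2 x y x1 y1 * det2 x y x2 y2)"
  shows "multiplier P Q \<zeta> = 1 - (\<tau>1 + \<tau>2 + \<tau>3) / \<tau>1"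
proof -
  define \<mu> where "\<mu> = \<tau>1 * (det2 x1 y1 x2 y2 * det2 x1 y1 x3 y3)"
  define G where "G x y = (\<tau>1 + \<tau>2 + \<tau>3) * (det2 x y x2 y2 * det2 x y x3 y3)" for x y
  have "\<mu> \<noteq> 0"
    using assms by (simp add: \<mu>_def)
  have "homog2 P x1 y1 = \<mu> * x1" "homog2 Q x1 y1 = \<mu> * y1"
    unfolding HP HQ \<mu>_def by algebra+
  moreover have "x * homog2 Q x y - y * homog2 P x y = det2 x y x1 y1 * G x y" for x y
    unfolding HP HQ G_def by algebra
  moreover have "(\<lambda>w. G w 1) holomorphic_on UNIV" "(\<lambda>w. G 1 w) holomorphic_on UNIV"
    unfolding G_def by (intro holomorphic_intros)+
  ultimately have "multiplier P Q \<zeta> = 1 - G x1 y1 / \<mu>"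
    using \<open>\<mu> \<noteq> 0\<close> by (intro multiplier_fixed_point_lift[OF cop deg coords])
  then show ?thesis
    using assms by (simp add: G_def \<mu>_def)
qed

section \<open>Conjugacy of normal forms\<close>

lemma linear_image_nonzero:
  fixes a b c d s t :: "'a :: idom"
  assumes "a * d - b * c \<noteq> 0" "s \<noteq> 0 \<or> t \<noteq> 0"
  shows "a * s + b * t \<noteq> 0 \<or> c * s + d * t \<noteq> 0"
proof (rule ccontr)
  assume "\<not> ?thesis"
  then have "a * s + b * t = 0" "c * s + d * t = 0"
    by auto
  moreover have "(a * d - b * c) * s = d * (a * s + b * t) - b * (c * s + d * t)"
    "(a * d - b * c) * t = a * (c * s + d * t) - c * (a * s + b * t)"
    by (simp_all add: algebra_simps)
  ultimately have "(a * d - b * c) * s = 0" "(a * d - b * c) * t = 0"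
    by simp_all
  with assms show False
    by simp
qed

lemma mobius_inverse_proj_pt:
  fixes a b c d s t :: complex
  assumes det: "a * d - b * c \<noteq> 0" and nz: "s \<noteq> 0 \<or> t \<noteq> 0"
  shows "mobius d (- b) (- c) a (proj_pt (a * s + b * t) (c * s + d * t)) = proj_pt s t"
proof -
  have "mobius d (- b) (- c) a (proj_pt (a * s + b * t) (c * s + d * t))
      = proj_pt ((a * d - b * c) * s) ((a * d - b * c) * t)"
    using mobius_proj_pt[OF linear_image_nonzero[OF det nz]] by (simp add: algebra_simps)
  also have "\<dots> = proj_pt s t"
    using det by (rule proj_pt_scale)
  finally show ?thesis .
qed

lemma proj_pt_linearE:
  fixes a b c d :: complex
  assumes det: "a * d - b * c \<noteq> 0"
  obtains s t where "s \<noteq> 0 \<or> t \<noteq> 0" "\<zeta> = proj_pt (a * s + b * t) (c * s + d * t)"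
proof -
  obtain p q where pq: "homog_coords \<zeta> = (p, q)"
    by (cases "homog_coords \<zeta>")
  define s t where "s = (d * p - b * q) / (a * d - b * c)" and "t = (a * q - c * p) / (a * d - b * c)"
  have "a * s + b * t = (a * (d * p - b * q) + b * (a * q - c * p)) / (a * d - b * c)"
    "c * s + d * t = (c * (d * p - b * q) + d * (a * q - c * p)) / (a * d - b * c)"
    unfolding s_def t_def by (simp_all only: times_divide_eq_right add_divide_distrib)
  moreover have "a * (d * p - b * q) + b * (a * q - c * p) = (a * d - b * c) * p"
    "c * (d * p - b * q) + d * (a * q - c * p) = (a * d - b * c) * q"
    by (simp_all add: algebra_simps)
  ultimately have "a * s + b * t = p" "c * s + d * t = q"
    using det by simp_all
  moreover have "s \<noteq> 0 \<or> t \<noteq> 0"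
    using homog_coords(2)[OF pq] calculation by auto
  ultimately show ?thesis
    using that homog_coords(1)[OF pq] by metis
qed

lemma mobius_conjugate_by_linear_lift:
  fixes R N :: "complex option \<Rightarrow> complex option" and RP RQ NP NQ :: "complex \<Rightarrow> complex \<Rightarrow> complex"
  assumes det: "a * d - b * c \<noteq> 0" and "C \<noteq> 0"
    and R: "\<And>x y. x \<noteq> 0 \<or> y \<noteq> 0 \<Longrightarrow> R (proj_pt x y) = proj_pt (RP x y) (RQ x y)"
    and N: "\<And>s t. s \<noteq> 0 \<or> t \<noteq> 0 \<Longrightarrow> N (proj_pt s t) = proj_pt (NP s t) (NQ s t)"
    and N_nz: "\<And>s t. s \<noteq> 0 \<or> t \<noteq> 0 \<Longrightarrow> NP s t \<noteq> 0 \<or> NQ s t \<noteq> 0"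
    and RP: "\<And>s t. RP (a * s + b * t) (c * s + d * t) = C * (a * NP s t + b * NQ s t)"
    and RQ: "\<And>s t. RQ (a * s + b * t) (c * s + d * t) = C * (c * NP s t + d * NQ s t)"
  shows "mobius_conjugate R N"
  unfolding mobius_conjugate_def
proof (intro exI conjI)
  show "d * a - - b * - c \<noteq> 0"
    using det by (simp add: algebra_simps)
  show "mobius d (- b) (- c) a \<circ> R = N \<circ> mobius d (- b) (- c) a"
  proof
    fix \<zeta>
    obtain s t where nz: "s \<noteq> 0 \<or> t \<noteq> 0" and \<zeta>: "\<zeta> = proj_pt (a * s + b * t) (c * s + d * t)"
      using proj_pt_linearE[OF det] .
    have "R \<zeta> = proj_pt (C * (a * NP s t + b * NQ s t)) (C * (c * NP s t + d * NQ s t))"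
      using R[OF linear_image_nonzero[OF det nz]] \<zeta> RP RQ by simp
    also have "\<dots> = proj_pt (a * NP s t + b * NQ s t) (c * NP s t + d * NQ s t)"
      using \<open>C \<noteq> 0\<close> by (rule proj_pt_scale)
    finally have "mobius d (- b) (- c) a (R \<zeta>) = proj_pt (NP s t) (NQ s t)"
      using mobius_inverse_proj_pt[OF det N_nz[OF nz]] by simp
    also have "\<dots> = N (mobius d (- b) (- c) a \<zeta>)"
      using N[OF nz] mobius_inverse_proj_pt[OF det nz] \<zeta> by simp
    finally show "(mobius d (- b) (- c) a \<circ> R) \<zeta> = (N \<circ> mobius d (- b) (- c) a) \<zeta>"
      by simp
  qed
qed

lemma mobius_conjugate_normal_forms:
  fixes R N :: "complex option \<Rightarrow> complex option" and RP RQ NP NQ :: "complex \<Rightarrow> complex \<Rightarrow> complex"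
  assumes d12: "det2 x1 y1 x2 y2 \<noteq> 0" and d13: "det2 x1 y1 x3 y3 \<noteq> 0" and d23: "det2 x2 y2 x3 y3 \<noteq> 0"
    and "c \<noteq> 0"
    and R: "\<And>x y. x \<noteq> 0 \<or> y \<noteq> 0 \<Longrightarrow> R (proj_pt x y) = proj_pt (RP x y) (RQ x y)"
    and RP: "\<And>x y. RP x y = c * u * x1 * (det2 x y x2 y2 * det2 x y x3 y3)
        + c * v * x2 * (det2 x y x1 y1 * det2 x y x3 y3) + c * w * x3 * (det2 x y x1 y1 * det2 x y x2 y2)"
    and RQ: "\<And>x y. RQ x y = c * u * y1 * (det2 x y x2 y2 * det2 x y x3 y3)
        + c * v * y2 * (det2 x y x1 y1 * det2 x y x3 y3) + c * w * y3 * (det2 x y x1 y1 * det2 x y x2 y2)"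
    and N: "\<And>s t. s \<noteq> 0 \<or> t \<noteq> 0 \<Longrightarrow> N (proj_pt s t) = proj_pt (NP s t) (NQ s t)"
    and N_nz: "\<And>s t. s \<noteq> 0 \<or> t \<noteq> 0 \<Longrightarrow> NP s t \<noteq> 0 \<or> NQ s t \<noteq> 0"
    and NP: "\<And>s t. NP s t = u * 1 * (det2 s t (-1) 1 * det2 s t 1 0)
        + v * (-1) * (det2 s t 1 1 * det2 s t 1 0) + w * 1 * (det2 s t 1 1 * det2 s t (-1) 1)"
    and NQ: "\<And>s t. NQ s t = u * 1 * (det2 s t (-1) 1 * det2 s t 1 0)
        + v * 1 * (det2 s t 1 1 * det2 s t 1 0) + w * 0 * (det2 s t 1 1 * det2 s t (-1) 1)"
  shows "mobius_conjugate R N"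
proof -
  \<comment> \<open>This linear map sends (1, 1), (-1, 1), (1, 0) to 2 det2 x2 y2 x3 y3 (x1, y1),
    2 det2 x1 y1 x3 y3 (x2, y2) and - det2 x1 y1 x2 y2 (x3, y3).\<close>
  define g11 g12 g21 g22 where "g11 = - det2 x1 y1 x2 y2 * x3"
    and "g12 = 2 * det2 x2 y2 x3 y3 * x1 + det2 x1 y1 x2 y2 * x3"
    and "g21 = - det2 x1 y1 x2 y2 * y3"
    and "g22 = 2 * det2 x2 y2 x3 y3 * y1 + det2 x1 y1 x2 y2 * y3"
  have "g11 * g22 - g12 * g21 = 2 * det2 x1 y1 x2 y2 * det2 x1 y1 x3 y3 * det2 x2 y2 x3 y3"
    unfolding g11_def g12_def g21_def g22_def by algebra
  then have det: "g11 * g22 - g12 * g21 \<noteq> 0"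
    using d12 d13 d23 by simp
  have scale: "- c * det2 x1 y1 x2 y2 * det2 x1 y1 x3 y3 * det2 x2 y2 x3 y3 \<noteq> 0"
    using d12 d13 d23 \<open>c \<noteq> 0\<close> by simp
  have "RP (g11 * s + g12 * t) (g21 * s + g22 * t)
      = - c * det2 x1 y1 x2 y2 * det2 x1 y1 x3 y3 * det2 x2 y2 x3 y3 * (g11 * NP s t + g12 * NQ s t)"
    "RQ (g11 * s + g12 * t) (g21 * s + g22 * t)
      = - c * det2 x1 y1 x2 y2 * det2 x1 y1 x3 y3 * det2 x2 y2 x3 y3 * (g21 * NP s t + g22 * NQ s t)" for s t
    unfolding RP RQ NP NQ g11_def g12_def g21_def g22_def by algebra+
  then show ?thesis
    using mobius_conjugate_by_linear_lift[where R = R and N = N and RP = RP and RQ = RQ and NP = NP and NQ = NQ, OF det scale R N N_nz] by blast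
qed

section \<open>Relaxed Newton maps\<close>

lemma coprime_if_no_common_root:
  fixes A B :: "'a :: alg_closed_field poly"
  assumes "\<And>z. poly A z \<noteq> 0 \<or> poly B z \<noteq> 0"
  shows "coprime A B"
proof (rule coprimeI)
  fix D assume "D dvd A" "D dvd B"
  have "poly D z \<noteq> 0" for z
    using assms[of z] poly_mult \<open>D dvd A\<close> \<open>D dvd B\<close> by (metis dvdE mult_zero_left)
  then have "degree D = 0"
    using alg_closed_imp_poly_has_root by (metis neq0_conv)
  moreover have "D \<noteq> 0"
    using \<open>D dvd A\<close> \<open>D dvd B\<close> assms[of 0] by auto
  ultimately show "is_unit D"
    by (simp add: is_unit_iff_degree)
qed

lemma rat_sphere_cancel_common_factor:
  fixes T A B :: "complex poly"
  assumes "T \<noteq> 0" and cop: "coprime A B"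
  shows "rat_sphere (T * A) (T * B) = rat_sphere A B"
proof
  fix \<zeta>
  have "is_unit (unit_factor T)"
    using \<open>T \<noteq> 0\<close> by simp
  then obtain u where u: "unit_factor T = [:u:]" "u dvd 1"
    using is_unit_poly_iff by blast
  then have "u \<noteq> 0"
    by auto
  have T: "T = smult u (normalize T)" "normalize T \<noteq> 0"
    using unit_factor_mult_normalize[of T] u \<open>T \<noteq> 0\<close> by simp_all
  have gcd: "gcd (T * A) (T * B) = normalize T"
    using cop by (simp add: gcd_mult_left coprime_iff_gcd_eq_1)
  have TA: "T * A = smult u A * normalize T" "T * B = smult u B * normalize T"
    by (subst (1) T(1), simp add: mult.commute)+
  have "red_num (T * A) (T * B) = smult u A" "red_den (T * A) (T * B) = smult u B"
    unfolding red_num_def red_den_def gcd by (simp_all only: TA nonzero_mult_div_cancel_right[OF T(2)])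
  then show "rat_sphere (T * A) (T * B) \<zeta> = rat_sphere A B \<zeta>"
    using \<open>u \<noteq> 0\<close> cop by (cases \<zeta>) (simp_all add: rat_sphere_def Let_def)
qed

lemma pderiv_two_root_powers:
  "pderiv ([:-1, 1:] ^ Suc k * [:1, 1:] ^ Suc m :: complex poly)
     = [:-1, 1:] ^ k * [:1, 1:] ^ m * [:of_nat (Suc k) - of_nat (Suc m), of_nat (Suc k) + of_nat (Suc m):]"
proof -
  have lin: "pderiv [:-1, 1:] = (1 :: complex poly)" "pderiv [:1, 1:] = (1 :: complex poly)"
    by (simp_all add: pderiv_pCons)
  have smult: "smult a p = [:a:] * p" for a :: complex and p
    by simp
  have "pderiv ([:-1, 1:] ^ Suc k * [:1, 1:] ^ Suc m :: complex poly)
      = [:-1, 1:] ^ Suc k * ([:of_nat (Suc m):] * [:1, 1:] ^ m * 1)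
        + [:1, 1:] ^ Suc m * ([:of_nat (Suc k):] * [:-1, 1:] ^ k * 1)"
    by (simp only: pderiv_mult pderiv_power_Suc lin smult)
  also have "\<dots> = [:-1, 1:] ^ k * [:1, 1:] ^ m
      * ([:of_nat (Suc m):] * [:-1, 1:] + [:of_nat (Suc k):] * [:1, 1:])"
    by (simp only: power_Suc) algebra
  also have "[:of_nat (Suc m):] * [:-1, 1:] + [:of_nat (Suc k):] * [:1, 1:]
      = [:of_nat (Suc k) - of_nat (Suc m), of_nat (Suc k) + of_nat (Suc m) :: complex:]"
    by (simp add: algebra_simps)
  finally show ?thesis .
qed

lemma newton_sphere_two_roots:
  fixes h :: complex and k m :: nat
  defines "K \<equiv> of_nat (Suc k) :: complex" and "M \<equiv> of_nat (Suc m) :: complex"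
  shows "newton_sphere h ([:-1, 1:] ^ Suc k * [:1, 1:] ^ Suc m)
    = rat_sphere ([:-1, 1:] ^ k * [:1, 1:] ^ m * [:h, K - M, K + M - h:])
                 ([:-1, 1:] ^ k * [:1, 1:] ^ m * [:K - M, K + M:])"
proof -
  have smult: "smult h p = [:h:] * p" for p
    by simp
  have "[:0, 1:] * ([:-1, 1:] ^ k * [:1, 1:] ^ m * [:K - M, K + M:]) - smult h ([:-1, 1:] ^ Suc k * [:1, 1:] ^ Suc m)
      = [:-1, 1:] ^ k * [:1, 1:] ^ m * ([:0, 1:] * [:K - M, K + M:] - [:h:] * ([:-1, 1:] * [:1, 1:]))"
    by (simp only: power_Suc smult) algebra
  also have "[:0, 1:] * [:K - M, K + M:] - [:h:] * ([:-1, 1:] * [:1, 1:]) = [:h, K - M, K + M - h:]"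
    by (simp add: algebra_simps)
  finally show ?thesis
    unfolding newton_sphere_def pderiv_two_root_powers K_def M_def by (simp only:)
qed

lemma newton_sphere_lift:
  fixes h :: complex and k m :: nat
  assumes "k \<ge> 1" "m \<ge> 1" "h \<noteq> 0" "h \<noteq> of_nat k + of_nat m"
  obtains A B where "coprime A B" "max (degree A) (degree B) = 2"
    and "newton_sphere h ([:-1, 1:] ^ k * [:1, 1:] ^ m) = rat_sphere A B"
    and "\<And>s t. homog2 A s t = - of_nat k * 1 * (det2 s t (-1) 1 * det2 s t 1 0)
        + - of_nat m * (-1) * (det2 s t 1 1 * det2 s t 1 0) + (of_nat k + of_nat m - h) * 1 * (det2 s t 1 1 * det2 s t (-1) 1)"
    and "\<And>s t. homog2 B s t = - of_nat k * 1 * (det2 s t (-1) 1 * det2 s t 1 0)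
        + - of_nat m * 1 * (det2 s t 1 1 * det2 s t 1 0) + (of_nat k + of_nat m - h) * 0 * (det2 s t 1 1 * det2 s t (-1) 1)"
proof -
  obtain k' m' where km: "k = Suc k'" "m = Suc m'"
    using assms(1,2) by (metis Suc_le_D One_nat_def)
  define A B where "A = [:h, of_nat k - of_nat m, of_nat k + of_nat m - h:]"
    and "B = [:of_nat k - of_nat m, of_nat k + of_nat m :: complex:]"
  have "poly A z \<noteq> 0 \<or> poly B z \<noteq> 0" for z
  proof (rule ccontr)
    assume "\<not> ?thesis"
    then have A: "h + (of_nat k - of_nat m) * z + (of_nat k + of_nat m - h) * z^2 = 0"
      and B: "of_nat k - of_nat m + (of_nat k + of_nat m) * z = 0"
      by (auto simp: A_def B_def algebra_simps power2_eq_square)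
    from A B have "h * ((1 - z) * (1 + z)) = 0"
      by algebra
    with \<open>h \<noteq> 0\<close> have "z = 1 \<or> z = -1"
      by (auto simp: add_eq_0_iff)
    with B assms(1,2) show False
      by (auto simp: algebra_simps)
  qed
  then have "coprime A B"
    by (rule coprime_if_no_common_root)
  moreover have "max (degree A) (degree B) = 2"
    using assms(4) by (simp add: A_def B_def)
  moreover have "newton_sphere h ([:-1, 1:] ^ k * [:1, 1:] ^ m) = rat_sphere A B"
    using newton_sphere_two_roots[of h k' m'] rat_sphere_cancel_common_factor[OF _ \<open>coprime A B\<close>]
    unfolding A_def B_def km by simp
  ultimately show ?thesis
    by (rule that) (simp_all add: homog2_def A_def B_def numeral_2_eq_2 algebra_simps power2_eq_square)
qed

lemma lift_normal_form_at_fixed_points: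
  fixes P Q :: "complex poly"
  assumes cop: "coprime P Q" and deg: "max (degree P) (degree Q) = 2"
    and fixed: "rat_sphere P Q a1 = a1" "rat_sphere P Q a2 = a2" "rat_sphere P Q r = r"
    and dist: "distinct [a1, a2, r]"
  obtains x1 y1 x2 y2 x3 y3 \<tau>1 \<tau>2 \<tau>3
  where "homog_coords a1 = (x1, y1)" "homog_coords a2 = (x2, y2)"
    and "det2 x1 y1 x2 y2 \<noteq> 0" "det2 x1 y1 x3 y3 \<noteq> 0" "det2 x2 y2 x3 y3 \<noteq> 0"
    and "\<tau>1 \<noteq> 0" "\<tau>2 \<noteq> 0" "\<tau>3 \<noteq> 0"
    and "\<And>x y. homog2 P x y = \<tau>1 * x1 * (det2 x y x2 y2 * det2 x y x3 y3)
        + \<tau>2 * x2 * (det2 x y x1 y1 * det2 x y x3 y3) + \<tau>3 * x3 * (det2 x y x1 y1 * det2 x y x2 y2)"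
    and "\<And>x y. homog2 Q x y = \<tau>1 * y1 * (det2 x y x2 y2 * det2 x y x3 y3)
        + \<tau>2 * y2 * (det2 x y x1 y1 * det2 x y x3 y3) + \<tau>3 * y3 * (det2 x y x1 y1 * det2 x y x2 y2)"
proof -
  obtain x1 y1 x2 y2 x3 y3 where
    coords: "homog_coords a1 = (x1, y1)" "homog_coords a2 = (x2, y2)" "homog_coords r = (x3, y3)"
    by (metis surj_pair)
  have d12: "det2 x1 y1 x2 y2 \<noteq> 0" and d13: "det2 x1 y1 x3 y3 \<noteq> 0" and d23: "det2 x2 y2 x3 y3 \<noteq> 0"
    using dist homog_coords_independent[OF coords(1) coords(2)] homog_coords_independent[OF coords(1) coords(3)]
      homog_coords_independent[OF coords(2) coords(3)]
    by auto
  show ?thesis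
    using lift_normal_form[OF cop deg homog_coords(2)[OF coords(1)] homog_coords(2)[OF coords(2)]
        homog_coords(2)[OF coords(3)] _ _ _ d12 d13 d23] that[OF coords(1,2) d12 d13 d23]
      fixed homog_coords(1)[OF coords(1)] homog_coords(1)[OF coords(2)] homog_coords(1)[OF coords(3)]
    by metis
qed

lemma conjugate_newton_if_normal_form:
  fixes P Q :: "complex poly" and h c :: complex and k m :: nat
  assumes cop: "coprime P Q" and deg: "max (degree P) (degree Q) = 2"
    and d12: "det2 x1 y1 x2 y2 \<noteq> 0" and d13: "det2 x1 y1 x3 y3 \<noteq> 0" and d23: "det2 x2 y2 x3 y3 \<noteq> 0"
    and "k \<ge> 1" "m \<ge> 1" "h \<noteq> 0" "h \<noteq> of_nat k + of_nat m" "c \<noteq> 0"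
    and HP: "\<And>x y. homog2 P x y = c * - of_nat k * x1 * (det2 x y x2 y2 * det2 x y x3 y3)
        + c * - of_nat m * x2 * (det2 x y x1 y1 * det2 x y x3 y3)
        + c * (of_nat k + of_nat m - h) * x3 * (det2 x y x1 y1 * det2 x y x2 y2)"
    and HQ: "\<And>x y. homog2 Q x y = c * - of_nat k * y1 * (det2 x y x2 y2 * det2 x y x3 y3)
        + c * - of_nat m * y2 * (det2 x y x1 y1 * det2 x y x3 y3)
        + c * (of_nat k + of_nat m - h) * y3 * (det2 x y x1 y1 * det2 x y x2 y2)"
  shows "mobius_conjugate (rat_sphere P Q) (newton_sphere h ([:-1, 1:] ^ k * [:1, 1:] ^ m))"
proof -
  obtain A B where cop': "coprime A B" and deg': "max (degree A) (degree B) = 2"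
    and newton: "newton_sphere h ([:-1, 1:] ^ k * [:1, 1:] ^ m) = rat_sphere A B"
    and HA: "\<And>s t. homog2 A s t = - of_nat k * 1 * (det2 s t (-1) 1 * det2 s t 1 0)
        + - of_nat m * (-1) * (det2 s t 1 1 * det2 s t 1 0) + (of_nat k + of_nat m - h) * 1 * (det2 s t 1 1 * det2 s t (-1) 1)"
    and HB: "\<And>s t. homog2 B s t = - of_nat k * 1 * (det2 s t (-1) 1 * det2 s t 1 0)
        + - of_nat m * 1 * (det2 s t 1 1 * det2 s t 1 0) + (of_nat k + of_nat m - h) * 0 * (det2 s t 1 1 * det2 s t (-1) 1)"
    using newton_sphere_lift[OF assms(6-9)] by blast
  show ?thesis
    unfolding newton
    using rat_sphere_proj_pt[OF cop deg] rat_sphere_proj_pt[OF cop' deg'] homog2_lift_nonzero[OF cop' deg']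
    by (rule mobius_conjugate_normal_forms[OF d12 d13 d23 \<open>c \<noteq> 0\<close> _ HP HQ _ _ HA HB])
qed

lemma conjugate_newton_if_multipliers:
  fixes P Q :: "complex poly" and h :: complex and k m :: nat
  assumes cop: "coprime P Q" and deg: "max (degree P) (degree Q) = 2"
    and fixed: "rat_sphere P Q a1 = a1" "rat_sphere P Q a2 = a2" "rat_sphere P Q r = r"
    and dist: "distinct [a1, a2, r]"
    and "k \<ge> 1" "m \<ge> 1" "h \<noteq> 0"
    and mult1: "multiplier P Q a1 = 1 - h / of_nat k"
    and mult2: "multiplier P Q a2 = 1 - h / of_nat m"
  shows "mobius_conjugate (rat_sphere P Q) (newton_sphere h ([:-1, 1:] ^ k * [:1, 1:] ^ m))"
proof -
  obtain x1 y1 x2 y2 x3 y3 \<tau>1 \<tau>2 \<tau>3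
    where coords: "homog_coords a1 = (x1, y1)" "homog_coords a2 = (x2, y2)"
    and d12: "det2 x1 y1 x2 y2 \<noteq> 0" and d13: "det2 x1 y1 x3 y3 \<noteq> 0" and d23: "det2 x2 y2 x3 y3 \<noteq> 0"
    and \<tau>: "\<tau>1 \<noteq> 0" "\<tau>2 \<noteq> 0" "\<tau>3 \<noteq> 0"
    and HP: "\<And>x y. homog2 P x y = \<tau>1 * x1 * (det2 x y x2 y2 * det2 x y x3 y3)
        + \<tau>2 * x2 * (det2 x y x1 y1 * det2 x y x3 y3) + \<tau>3 * x3 * (det2 x y x1 y1 * det2 x y x2 y2)"
    and HQ: "\<And>x y. homog2 Q x y = \<tau>1 * y1 * (det2 x y x2 y2 * det2 x y x3 y3)
        + \<tau>2 * y2 * (det2 x y x1 y1 * det2 x y x3 y3) + \<tau>3 * y3 * (det2 x y x1 y1 * det2 x y x2 y2)"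
    by (rule lift_normal_form_at_fixed_points[OF cop deg fixed dist]) (rule that; assumption)
  define \<kappa> where "\<kappa> = \<tau>1 + \<tau>2 + \<tau>3"
  have "multiplier P Q a1 = 1 - \<kappa> / \<tau>1"
    unfolding \<kappa>_def using multiplier_normal_form[OF cop deg coords(1) d12 d13 \<tau>(1) HP HQ] .
  moreover have "multiplier P Q a2 = 1 - \<kappa> / \<tau>2"
  proof -
    have d21: "det2 x2 y2 x1 y1 \<noteq> 0"
      using d12 by (simp add: right_minus_eq mult.commute)
    have "homog2 P x y = \<tau>2 * x2 * (det2 x y x1 y1 * det2 x y x3 y3)
        + \<tau>1 * x1 * (det2 x y x2 y2 * det2 x y x3 y3) + \<tau>3 * x3 * (det2 x y x2 y2 * det2 x y x1 y1)"
      "homog2 Q x y = \<tau>2 * y2 * (det2 x y x1 y1 * det2 x y x3 y3)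
        + \<tau>1 * y1 * (det2 x y x2 y2 * det2 x y x3 y3) + \<tau>3 * y3 * (det2 x y x2 y2 * det2 x y x1 y1)" for x y
      unfolding HP HQ by (simp_all add: ac_simps)
    from multiplier_normal_form[OF cop deg coords(2) d21 d23 \<tau>(2) this]
    show ?thesis
      by (simp add: \<kappa>_def ac_simps)
  qed
  ultimately have \<tau>12: "\<tau>1 = - \<kappa> / h * - of_nat k" "\<tau>2 = - \<kappa> / h * - of_nat m"
    using mult1 mult2 \<tau> \<open>h \<noteq> 0\<close> \<open>k \<ge> 1\<close> \<open>m \<ge> 1\<close> by (auto simp: field_simps)
  then have \<tau>3: "\<tau>3 = - \<kappa> / h * (of_nat k + of_nat m - h)"
    using \<open>h \<noteq> 0\<close> unfolding \<kappa>_def by (simp add: field_simps)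
  with \<tau>(3) have "h \<noteq> of_nat k + of_nat m" and "- \<kappa> / h \<noteq> 0"
    by auto
  then show ?thesis
    using assms(7-9) HP HQ \<tau>12 \<tau>3
    by (intro conjugate_newton_if_normal_form[OF cop deg d12 d13 d23, where c = "- \<kappa> / h"]) simp_all
qed

lemma conjugate_newton_if_fp_index_ratio:
  fixes P Q :: "complex poly" and k m :: nat
  assumes cop: "coprime P Q" and deg: "max (degree P) (degree Q) = 2"
    and fixed: "rat_sphere P Q a1 = a1" "rat_sphere P Q a2 = a2" "rat_sphere P Q r = r"
    and dist: "distinct [a1, a2, r]"
    and mult: "multiplier P Q a1 \<noteq> 1" "multiplier P Q a2 \<noteq> 1"
    and ratio: "fp_index P Q a1 / fp_index P Q a2 = of_nat k / of_nat m"
  shows "\<exists>h. h \<noteq> 0 \<and> mobius_conjugate (rat_sphere P Q) (newton_sphere h ([:-1, 1:] ^ k * [:1, 1:] ^ m))"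
proof -
  have index: "fp_index P Q a1 = 1 / (1 - multiplier P Q a1)" "fp_index P Q a2 = 1 / (1 - multiplier P Q a2)"
    using fp_index_eq_inverse_one_minus_multiplier cop fixed(1,2) mult by blast+
  then have "fp_index P Q a1 / fp_index P Q a2 \<noteq> 0"
    using mult by simp
  then have "k \<noteq> 0" "m \<noteq> 0"
    using ratio by auto
  define h where "h = of_nat k * (1 - multiplier P Q a1)"
  have "h \<noteq> 0" "multiplier P Q a1 = 1 - h / of_nat k"
    using \<open>k \<noteq> 0\<close> mult by (simp_all add: h_def)
  moreover have "multiplier P Q a2 = 1 - h / of_nat m"
    using ratio index \<open>m \<noteq> 0\<close> mult by (simp add: h_def field_simps)
  ultimately show ?thesis
    using conjugate_newton_if_multipliers[OF cop deg fixed dist, of k m h] \<open>k \<noteq> 0\<close> \<open>m \<noteq> 0\<close> by auto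
qed

theorem mainTheorem8:
  fixes P Q :: "complex poly" and a1 a2 r :: "complex option"
  assumes "coprime P Q"
    and "max (degree P) (degree Q) = 2"
    and "rat_sphere P Q a1 = a1" and "rat_sphere P Q a2 = a2" and "rat_sphere P Q r = r"
    and "distinct [a1, a2, r]"
    and "norm (multiplier P Q a1) < 1" and "norm (multiplier P Q a2) < 1"
    and "norm (multiplier P Q r) > 1"
  shows
    "(\<forall>lam. multiplier P Q a1 = lam \<and> multiplier P Q a2 = lam \<longrightarrow>
        mobius_conjugate (rat_sphere P Q) (newton_sphere (1 - lam) [:-1, 0, 1:]))
   \<and> (\<forall>m n :: nat. m > 0 \<and> n > 0 \<and> multiplier P Q a1 = 0 \<and>
        multiplier P Q a2 = of_nat n / of_nat m \<longrightarrow>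
        mobius_conjugate (rat_sphere P Q)
          (newton_sphere (of_nat m - of_nat n) ([:-1, 1:] ^ (m - n) * [:1, 1:] ^ m)))
   \<and> (\<forall>k m :: nat. fp_index P Q a1 / fp_index P Q a2 = of_nat k / of_nat m \<longrightarrow>
        (\<exists>h. h \<noteq> 0 \<and> mobius_conjugate (rat_sphere P Q)
                          (newton_sphere h ([:-1, 1:] ^ k * [:1, 1:] ^ m))))"
proof (intro conjI allI impI; (elim conjE)?)
  note conjugate = conjugate_newton_if_multipliers[OF assms(1-6)]
  have attracting: "multiplier P Q a1 \<noteq> 1" "multiplier P Q a2 \<noteq> 1"
    using assms(7,8) by auto
  show "mobius_conjugate (rat_sphere P Q) (newton_sphere (1 - lam) [:-1, 0, 1:])"
    if "multiplier P Q a1 = lam" "multiplier P Q a2 = lam" for lam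
    using conjugate[of 1 1 "1 - lam"] that attracting by simp
  show "mobius_conjugate (rat_sphere P Q) (newton_sphere (of_nat m - of_nat n) ([:-1, 1:] ^ (m - n) * [:1, 1:] ^ m))"
    if "m > 0" "n > 0" "multiplier P Q a1 = 0" "multiplier P Q a2 = of_nat n / of_nat m" for m n :: nat
  proof -
    have "n < m"
      using assms(8) that by (simp add: norm_divide divide_less_eq)
    then show ?thesis
      using conjugate[of "m - n" m "of_nat (m - n)"] that by (simp add: of_nat_diff field_simps)
  qed
  show "\<exists>h. h \<noteq> 0 \<and> mobius_conjugate (rat_sphere P Q) (newton_sphere h ([:-1, 1:] ^ k * [:1, 1:] ^ m))"
    if "fp_index P Q a1 / fp_index P Q a2 = of_nat k / of_nat m" for k m :: nat
    using conjugate_newton_if_fp_index_ratio[OF assms(1-6) attracting that] .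
qed

end
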